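(* Let $\varepsilon>0$ and $n\ge1$. For every agent $k$, $\|\Delta M_{k,n}\|=\|\widehat M_{k,n}-M_{k,n}\|\le\varepsilon$ provided that for all $i\le n-1$ $$\Delta\rho_{k,i}\le\frac{6\varepsilon\, b_\epsilon^{\,n-i-1}}{\pi^2i^2\gamma F_{k,i}\gamma^{n-i-1}(1-\lambda)},$$ where $\pi=3.14159\ldots$ is the numerical constant.
   Context: Constants $\lambda,\gamma\in(0,1)$, $b_\epsilon>0$ with $\gamma<b_\epsilon$. For agent $k$, two sequences of importance ratios $\rho_{k,n},\widehat\rho_{k,n}\in(0,1/b_\epsilon]$ are given (from estimated and full-observation beliefs respectively), with $\Delta\rho_{k,n}=\widehat\rho_{k,n}-\rho_{k,n}$. Define $F_{k,0}=\widehat F_{k,0}=0$, $F_{k,n}=1+\gamma\rho_{k,n-1}F_{k,n-1}$, $\widehat F_{k,n}=1+\gamma\widehat\rho_{k,n-1}\widehat F_{k,n-1}$, $M_{k,n}=\lambda+(1-\lambda)F_{k,n}$, $\widehat M_{k,n}=\lambda+(1-\lambda)\widehat F_{k,n}$. *)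

theory Defs
  imports Complex_Main
begin

fun Fseq :: "real \<Rightarrow> (nat \<Rightarrow> real) \<Rightarrow> nat \<Rightarrow> real" where
  "Fseq \<gamma> \<rho> 0 = 0"
| "Fseq \<gamma> \<rho> (Suc n) = 1 + \<gamma> * \<rho> n * Fseq \<gamma> \<rho> n"

definition Mseq :: "real \<Rightarrow> real \<Rightarrow> (nat \<Rightarrow> real) \<Rightarrow> nat \<Rightarrow> real" where
  "Mseq lam \<gamma> \<rho> n = lam + (1 - lam) * Fseq \<gamma> \<rho> n"

end

theory Submission
  imports Defs "HOL-Analysis.Analysis"
begin

text \<open>Subtracting the two recursions gives
  \<open>\<Delta>F (m+1) = \<gamma> \<rho>h m \<Delta>F m + \<gamma> \<Delta>\<rho> m F m\<close>, and \<open>\<gamma> \<rho>h m \<le> \<gamma>/b\<close>; unrolling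
  bounds \<open>\<Delta>F n\<close> by a sum of the perturbations \<open>\<Delta>\<rho> i\<close>, each damped by \<open>(\<gamma>/b)^(n-1-i)\<close>.
  The hypothesis makes the \<open>i\<close>-th summand at most \<open>6\<epsilon>/(\<pi>\<^sup>2 (1-\<lambda>) i\<^sup>2)\<close>, and
  \<open>\<Sum> 1/i\<^sup>2 \<le> \<pi>\<^sup>2/6\<close> (the Basel sum) finishes the estimate.\<close>

lemma Fseq_nonneg:
  assumes "0 \<le> g" "\<And>m. 0 \<le> r m"
  shows "0 \<le> Fseq g r m"
  by (induction m) (simp_all add: assms)

lemma Fseq_ge_one:
  assumes "0 \<le> g" "\<And>m. 0 \<le> r m" "1 \<le> m"
  shows "1 \<le> Fseq g r m"
proof -
  obtain j where "m = Suc j" using \<open>1 \<le> m\<close> by (cases m) auto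
  then show ?thesis using assms(1,2) Fseq_nonneg[of g r j] by simp
qed

lemma Fseq_Suc_diff:
  "Fseq g rh (Suc m) - Fseq g r (Suc m)
     = g * rh m * (Fseq g rh m - Fseq g r m) + g * (rh m - r m) * Fseq g r m"
  by (simp add: algebra_simps)

lemma abs_Fseq_diff_le:
  assumes "0 \<le> g" "\<And>m. 0 \<le> r m" "\<And>m. 0 \<le> rh m" "\<And>m. g * rh m \<le> q"
  shows "\<bar>Fseq g rh m - Fseq g r m\<bar>
           \<le> (\<Sum>i<m. g * \<bar>rh i - r i\<bar> * Fseq g r i * q ^ (m - 1 - i))"
proof (induction m)
  case 0
  then show ?case by simp
next
  case (Suc m)
  have q: "0 \<le> q" using assms(4)[of m] mult_nonneg_nonneg[OF assms(1) assms(3)[of m]] by linarith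
  have "\<bar>g * rh m * (Fseq g rh m - Fseq g r m)\<bar> \<le> q * \<bar>Fseq g rh m - Fseq g r m\<bar>"
    using assms(1,3,4) by (simp add: abs_mult mult_right_mono)
  also have "\<dots> \<le> q * (\<Sum>i<m. g * \<bar>rh i - r i\<bar> * Fseq g r i * q ^ (m - 1 - i))"
    using Suc.IH q by (rule mult_left_mono)
  also have "\<dots> = (\<Sum>i<m. g * \<bar>rh i - r i\<bar> * Fseq g r i * q ^ (Suc m - 1 - i))"
    unfolding sum_distrib_left by (intro sum.cong) (auto simp flip: Suc_diff_Suc)
  finally have "\<bar>g * rh m * (Fseq g rh m - Fseq g r m)\<bar>
      \<le> (\<Sum>i<m. g * \<bar>rh i - r i\<bar> * Fseq g r i * q ^ (Suc m - 1 - i))" .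
  moreover have "\<bar>g * (rh m - r m) * Fseq g r m\<bar> = g * \<bar>rh m - r m\<bar> * Fseq g r m"
    using assms(1) Fseq_nonneg[OF assms(1,2)] by (simp add: abs_mult)
  ultimately show ?case
    unfolding Fseq_Suc_diff sum.lessThan_Suc using abs_triangle_ineq by fastforce
qed

lemma sum_inverse_squares_le: "(\<Sum>i = 1..<n. 1 / (real i)\<^sup>2) \<le> pi\<^sup>2 / 6"
proof -
  have basel: "(\<lambda>i. 1 / (real (Suc i))\<^sup>2) sums (pi\<^sup>2 / 6)"
    using inverse_squares_sums by simp
  have "(\<Sum>i = 1..<n. 1 / (real i)\<^sup>2) \<le> (\<Sum>i = 1..<Suc n. 1 / (real i)\<^sup>2)"
    by (intro sum_mono2) auto
  also have "\<dots> = (\<Sum>i<n. 1 / (real (Suc i))\<^sup>2)"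
    by (induction n) auto
  also have "\<dots> \<le> (\<Sum>i. 1 / (real (Suc i))\<^sup>2)"
    using basel by (intro sum_le_suminf) (auto simp: sums_iff)
  also have "\<dots> = pi\<^sup>2 / 6"
    using basel by (rule sums_unique[symmetric])
  finally show ?thesis .
qed

lemma abs_Fseq_diff_le_inverse_squares:
  assumes "0 \<le> g" "\<And>m. 0 \<le> r m" "\<And>m. 0 \<le> rh m" "\<And>m. g * rh m \<le> q" "0 \<le> c"
    and "\<And>i. 1 \<le> i \<Longrightarrow> i < m \<Longrightarrow> g * \<bar>rh i - r i\<bar> * Fseq g r i * q ^ (m - 1 - i) \<le> c / (real i)\<^sup>2"
  shows "\<bar>Fseq g rh m - Fseq g r m\<bar> \<le> c * (pi\<^sup>2 / 6)"
proof -
  have "\<bar>Fseq g rh m - Fseq g r m\<bar>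
      \<le> (\<Sum>i<m. g * \<bar>rh i - r i\<bar> * Fseq g r i * q ^ (m - 1 - i))"
    using assms(1-4) by (rule abs_Fseq_diff_le)
  also have "\<dots> = (\<Sum>i = 1..<m. g * \<bar>rh i - r i\<bar> * Fseq g r i * q ^ (m - 1 - i))"
    by (rule sum.mono_neutral_right) (auto simp: not_less_eq_eq)
  also have "\<dots> \<le> (\<Sum>i = 1..<m. c * (1 / (real i)\<^sup>2))"
    using assms(6) by (intro sum_mono) auto
  also have "\<dots> \<le> c * (pi\<^sup>2 / 6)"
    unfolding sum_distrib_left[symmetric] using sum_inverse_squares_le \<open>0 \<le> c\<close>
    by (rule mult_left_mono)
  finally show ?thesis .
qed

lemma Mseq_diff: "Mseq lam g rh n - Mseq lam g r n = (1 - lam) * (Fseq g rh n - Fseq g r n)"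
  unfolding Mseq_def by (simp add: algebra_simps)

theorem lemma9:
  fixes lam \<gamma> b \<epsilon> :: real
    and \<rho> \<rho>h :: "'k \<Rightarrow> nat \<Rightarrow> real"
    and n :: nat
  assumes "0 < lam" "lam < 1" "0 < \<gamma>" "\<gamma> < 1" "0 < b" "\<gamma> < b"
    and "\<And>k m. 0 < \<rho> k m \<and> \<rho> k m \<le> 1 / b"
    and "\<And>k m. 0 < \<rho>h k m \<and> \<rho>h k m \<le> 1 / b"
    and "0 < \<epsilon>" "1 \<le> n"
  shows "\<forall>k. (\<forall>i\<in>{1..n-1}. \<bar>\<rho>h k i - \<rho> k i\<bar>
            \<le> 6 * \<epsilon> * b ^ (n - i - 1) /
               (pi\<^sup>2 * (real i)\<^sup>2 * \<gamma> * Fseq \<gamma> (\<rho> k) i * \<gamma> ^ (n - i - 1) * (1 - lam)))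
         \<longrightarrow> \<bar>Mseq lam \<gamma> (\<rho>h k) n - Mseq lam \<gamma> (\<rho> k) n\<bar> \<le> \<epsilon>"
proof (intro allI impI)
  fix k
  assume H: "\<forall>i\<in>{1..n-1}. \<bar>\<rho>h k i - \<rho> k i\<bar>
            \<le> 6 * \<epsilon> * b ^ (n - i - 1) /
               (pi\<^sup>2 * (real i)\<^sup>2 * \<gamma> * Fseq \<gamma> (\<rho> k) i * \<gamma> ^ (n - i - 1) * (1 - lam))"
  define c where "c = 6 * \<epsilon> / (pi\<^sup>2 * (1 - lam))"
  have r: "0 \<le> \<rho> k m" and rh: "0 \<le> \<rho>h k m" "\<gamma> * \<rho>h k m \<le> \<gamma> / b" for m
    using assms(3) assms(7,8)[of k m] by (auto simp: divide_inverse mult_left_mono)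
  have "\<gamma> * \<bar>\<rho>h k i - \<rho> k i\<bar> * Fseq \<gamma> (\<rho> k) i * (\<gamma> / b) ^ (n - 1 - i) \<le> c / (real i)\<^sup>2"
    if "1 \<le> i" "i < n" for i
  proof -
    have F: "1 \<le> Fseq \<gamma> (\<rho> k) i" using Fseq_ge_one[of \<gamma> "\<rho> k"] r assms(3) that by auto
    have "\<bar>\<rho>h k i - \<rho> k i\<bar> \<le> c * b ^ (n - 1 - i) / ((real i)\<^sup>2 * \<gamma> * Fseq \<gamma> (\<rho> k) i * \<gamma> ^ (n - 1 - i))"
      using H that by (simp add: c_def field_simps)
    then show ?thesis
      using F that assms(2,3,5) by (simp add: field_simps power_divide)
  qed
  then have "\<bar>Fseq \<gamma> (\<rho>h k) n - Fseq \<gamma> (\<rho> k) n\<bar> \<le> c * (pi\<^sup>2 / 6)"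
    using assms(2,3,9) r rh by (intro abs_Fseq_diff_le_inverse_squares) (auto simp: c_def)
  also have "c * (pi\<^sup>2 / 6) = \<epsilon> / (1 - lam)"
    using assms(2) by (simp add: c_def field_simps)
  finally show "\<bar>Mseq lam \<gamma> (\<rho>h k) n - Mseq lam \<gamma> (\<rho> k) n\<bar> \<le> \<epsilon>"
    using assms(2) by (simp add: Mseq_diff abs_mult pos_le_divide_eq mult.commute)
qed

end
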